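(* For each $a\in[0,1)$, the set $[(a,0)]=\{H_\varphi(a,0):\varphi\in\mathrm{Aut}(\mathbb{D})\}$ is a closed, path-connected subset of $\mathbb{G}$.
   Context: $\mathbb{D}$ is the open unit disc in $\mathbb{C}$ and $\mathrm{Aut}(\mathbb{D})$ its group of holomorphic automorphisms. The symmetrized bidisc is $\mathbb{G}=\{(z_1+z_2,z_1z_2): z_1,z_2\in\mathbb{D}\}\subset\mathbb{C}^2$. For $\varphi\in\mathrm{Aut}(\mathbb{D})$, $H_\varphi:\mathbb{G}\to\mathbb{G}$ is defined by $H_\varphi(z_1+z_2,z_1z_2)=(\varphi(z_1)+\varphi(z_2),\varphi(z_1)\varphi(z_2))$. "Closed" means closed in the relative topology of $\mathbb{G}$. *)

theory Defs
  imports "HOL-Complex_Analysis.Complex_Analysis"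
begin

definition unit_disc :: "complex set" where
  "unit_disc = ball 0 1"

definition AutD :: "(complex \<Rightarrow> complex) set" where
  "AutD = {\<phi>. \<phi> holomorphic_on unit_disc \<and> bij_betw \<phi> unit_disc unit_disc}"

definition symm_bidisc :: "(complex \<times> complex) set" where
  "symm_bidisc = {(z1 + z2, z1 * z2) | z1 z2. z1 \<in> unit_disc \<and> z2 \<in> unit_disc}"

text \<open>H_phi(z1+z2, z1 z2) = (phi z1 + phi z2, phi z1 phi z2); well defined since symmetric.\<close>
definition H :: "(complex \<Rightarrow> complex) \<Rightarrow> complex \<times> complex \<Rightarrow> complex \<times> complex" where
  "H \<phi> p = (SOME q. \<exists>z1 z2. z1 \<in> unit_disc \<and> z2 \<in> unit_disc \<and> p = (z1 + z2, z1 * z2)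
                        \<and> q = (\<phi> z1 + \<phi> z2, \<phi> z1 * \<phi> z2))"

end

(* Automorphisms of the disc preserve the pseudo-hyperbolic distance |z - w| / |1 - cnj z w|:
   after moving one point to 0 by a Moebius map, Schwarz's lemma applied to the automorphism
   and to its inverse shows that it preserves the norm. Conversely, a rotation followed by a
   Moebius map sends (0, a) to any pair of points at distance a. So the orbit of
   (a, 0) = (0 + a, 0 * a) is the set of all (z1 + z2, z1 z2) with z1, z2 in D at distance a.
   This set is the continuous image of D x {|v| = a} under (w, v) |-> (w + m, w m), where
   m = moebius (-w) v, hence path-connected. Since |z1 - z2|^2 and |1 - cnj z1 z2|^2 are
   functions of z1 + z2 and z1 z2 alone, it is also the trace on G of the zero set of a
   continuous function, hence closed in G. *)

theory Submission
  imports Defs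
begin

(* moebius w z = (z - w) / (1 - cnj w z): it sends w to 0, and moebius (-w) is its inverse. *)
abbreviation moebius :: "complex \<Rightarrow> complex \<Rightarrow> complex" where
  "moebius w \<equiv> Moebius_function 0 w"

lemma moebius_inverse:
  assumes "norm w < 1" "norm z < 1"
  shows "moebius w (moebius (-w) z) = z" "moebius (-w) (moebius w z) = z"
  using Moebius_function_compose assms by auto

lemma AutD_mem_unit_disc:
  assumes "\<phi> \<in> AutD" "z \<in> unit_disc"
  shows "\<phi> z \<in> unit_disc"
proof -
  have "bij_betw \<phi> unit_disc unit_disc"
    using assms(1) by (simp add: AutD_def)
  then show ?thesis using assms(2) by (rule bij_betw_apply)
qed

lemma AutD_comp:
  assumes "\<phi> \<in> AutD" "\<psi> \<in> AutD"
  shows "\<phi> \<circ> \<psi> \<in> AutD"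
proof -
  have "\<psi> ` unit_disc \<subseteq> unit_disc"
    using assms(2) AutD_mem_unit_disc by blast
  moreover have "\<phi> holomorphic_on unit_disc" "\<psi> holomorphic_on unit_disc"
      and "bij_betw \<phi> unit_disc unit_disc" "bij_betw \<psi> unit_disc unit_disc"
    using assms by (simp_all add: AutD_def)
  ultimately show ?thesis
    unfolding AutD_def by (simp add: holomorphic_on_compose_gen bij_betw_trans)
qed

lemma AutD_inv_into:
  assumes "\<phi> \<in> AutD"
  shows "inv_into unit_disc \<phi> \<in> AutD"
proof -
  have hol: "\<phi> holomorphic_on unit_disc" and bij: "bij_betw \<phi> unit_disc unit_disc"
    using assms by (simp_all add: AutD_def)
  have "open unit_disc" by (simp add: unit_disc_def)
  obtain g where g_hol: "g holomorphic_on \<phi> ` unit_disc"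
      and g_inv: "\<And>z. z \<in> unit_disc \<Longrightarrow> g (\<phi> z) = z"
    by (rule holomorphic_has_inverse[OF hol \<open>open unit_disc\<close> bij_betw_imp_inj_on[OF bij]]) (rule that)
  have surj: "\<phi> ` unit_disc = unit_disc"
    using bij by (simp add: bij_betw_def)
  have "g w = inv_into unit_disc \<phi> w" if "w \<in> unit_disc" for w
  proof -
    have "w \<in> \<phi> ` unit_disc" using that surj by simp
    then obtain z where "w = \<phi> z" "z \<in> unit_disc" by (rule imageE)
    then show ?thesis using g_inv bij_betw_inv_into_left[OF bij] by simp
  qed
  with g_hol have "inv_into unit_disc \<phi> holomorphic_on unit_disc"
    unfolding surj by (rule holomorphic_transform)
  with bij_betw_inv_into[OF bij] show ?thesis by (simp add: AutD_def)
qed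

lemma moebius_in_AutD:
  assumes "norm w < 1"
  shows "moebius w \<in> AutD"
proof -
  have "bij_betw (moebius w) unit_disc unit_disc"
    by (rule bij_betw_byWitness[where f'="moebius (-w)"])
       (use assms moebius_inverse Moebius_function_norm_lt_1 in \<open>auto simp: unit_disc_def\<close>)
  with Moebius_function_holomorphic[OF assms] show ?thesis
    by (simp add: AutD_def unit_disc_def)
qed

lemma rotation_in_AutD:
  assumes "norm u = 1"
  shows "(\<lambda>z. u * z) \<in> AutD"
proof -
  have "u \<noteq> 0" using assms by auto
  have "bij_betw (\<lambda>z. u * z) unit_disc unit_disc"
    by (rule bij_betw_byWitness[where f'="\<lambda>z. z / u"])
       (use assms \<open>u \<noteq> 0\<close> in \<open>auto simp: unit_disc_def norm_mult norm_divide\<close>)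
  then show ?thesis by (simp add: AutD_def)
qed

lemma AutD_fixing_zero_norm_eq:
  assumes "\<phi> \<in> AutD" "\<phi> 0 = 0" "z \<in> unit_disc"
  shows "norm (\<phi> z) = norm z"
proof -
  have Schwarz: "norm (\<psi> \<zeta>) \<le> norm \<zeta>" if "\<psi> \<in> AutD" "\<psi> 0 = 0" "\<zeta> \<in> unit_disc" for \<psi> \<zeta>
    using that AutD_mem_unit_disc[OF that(1)]
    by (intro Schwarz_Lemma(1)) (auto simp: AutD_def unit_disc_def)
  define \<psi> where "\<psi> = inv_into unit_disc \<phi>"
  have bij: "bij_betw \<phi> unit_disc unit_disc" using assms(1) by (simp add: AutD_def)
  have "0 \<in> unit_disc" by (simp add: unit_disc_def)
  then have "\<psi> 0 = 0" and "\<psi> (\<phi> z) = z"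
    using bij_betw_inv_into_left[OF bij] assms(2,3) by (metis \<psi>_def)+
  then have "norm z \<le> norm (\<phi> z)"
    using Schwarz[of \<psi> "\<phi> z"] AutD_inv_into[OF assms(1)] AutD_mem_unit_disc[OF assms(1,3)]
    by (simp add: \<psi>_def)
  with Schwarz[OF assms] show ?thesis by simp
qed

definition pseudo_hyperbolic_dist :: "complex \<Rightarrow> complex \<Rightarrow> real" where
  "pseudo_hyperbolic_dist z w = norm (moebius z w)"

lemma moebius_denominator_nonzero:
  assumes "norm z < 1" "norm w < 1"
  shows "1 - cnj z * w \<noteq> 0"
proof -
  have "norm (cnj z * w) < 1 * 1"
    unfolding norm_mult complex_mod_cnj by (rule mult_strict_mono) (use assms in auto)
  then show ?thesis by auto
qed

lemma pseudo_hyperbolic_dist_AutD_invariant: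
  assumes "\<phi> \<in> AutD" "z \<in> unit_disc" "w \<in> unit_disc"
  shows "pseudo_hyperbolic_dist (\<phi> z) (\<phi> w) = pseudo_hyperbolic_dist z w"
proof -
  have z: "norm z < 1" and w: "norm w < 1" and \<phi>z: "norm (\<phi> z) < 1"
    using assms AutD_mem_unit_disc[OF assms(1,2)] by (auto simp: unit_disc_def)
  define \<psi> where "\<psi> = moebius (\<phi> z) \<circ> \<phi> \<circ> moebius (-z)"
  have "\<psi> \<in> AutD"
    unfolding \<psi>_def using assms(1) z \<phi>z by (intro AutD_comp moebius_in_AutD) auto
  moreover have "\<psi> 0 = 0"
    by (simp add: \<psi>_def Moebius_function_of_zero Moebius_function_eq_zero)
  moreover have "moebius z w \<in> unit_disc"
    using Moebius_function_norm_lt_1 z w by (simp add: unit_disc_def)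
  ultimately have "norm (\<psi> (moebius z w)) = norm (moebius z w)"
    by (rule AutD_fixing_zero_norm_eq)
  moreover have "\<psi> (moebius z w) = moebius (\<phi> z) (\<phi> w)"
    by (simp only: \<psi>_def comp_def moebius_inverse(2)[OF z w])
  ultimately show ?thesis
    by (simp add: pseudo_hyperbolic_dist_def)
qed

lemma sum_prod_eq_cases:
  fixes w1 w2 z1 z2 :: "'a::idom"
  assumes "w1 + w2 = z1 + z2" "w1 * w2 = z1 * z2"
  shows "(w1 = z1 \<and> w2 = z2) \<or> (w1 = z2 \<and> w2 = z1)"
proof -
  have "(w1 - z1) * (w1 - z2) = w1 * w1 - (z1 + z2) * w1 + z1 * z2"
    by (simp add: algebra_simps)
  also have "\<dots> = w1 * w1 - (w1 + w2) * w1 + w1 * w2"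
    by (simp only: assms)
  also have "\<dots> = 0"
    by (simp add: algebra_simps)
  finally have "w1 = z1 \<or> w1 = z2" by simp
  then show ?thesis using assms(1) by auto
qed

lemma H_sum_prod:
  assumes "z1 \<in> unit_disc" "z2 \<in> unit_disc"
  shows "H \<phi> (z1 + z2, z1 * z2) = (\<phi> z1 + \<phi> z2, \<phi> z1 * \<phi> z2)"
proof -
  let ?P = "\<lambda>q. \<exists>w1 w2. w1 \<in> unit_disc \<and> w2 \<in> unit_disc \<and> (z1 + z2, z1 * z2) = (w1 + w2, w1 * w2)
                 \<and> q = (\<phi> w1 + \<phi> w2, \<phi> w1 * \<phi> w2)"
  have "?P (\<phi> z1 + \<phi> z2, \<phi> z1 * \<phi> z2)"
    using assms by (intro exI[of _ z1] exI[of _ z2]) simp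
  then have "?P (SOME q. ?P q)" by (rule someI[of ?P])
  then obtain w1 w2 where sym: "(z1 + z2, z1 * z2) = (w1 + w2, w1 * w2)"
      and some: "(SOME q. ?P q) = (\<phi> w1 + \<phi> w2, \<phi> w1 * \<phi> w2)"
    by (elim exE conjE) (rule that)
  have H_eq: "H \<phi> (z1 + z2, z1 * z2) = (\<phi> w1 + \<phi> w2, \<phi> w1 * \<phi> w2)"
    unfolding H_def by (rule some)
  from sym have "w1 + w2 = z1 + z2" "w1 * w2 = z1 * z2" by simp_all
  then have "(w1 = z1 \<and> w2 = z2) \<or> (w1 = z2 \<and> w2 = z1)" by (rule sum_prod_eq_cases)
  then show ?thesis
  proof
    assume "w1 = z1 \<and> w2 = z2"
    with H_eq show ?thesis by simp
  next
    assume "w1 = z2 \<and> w2 = z1"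
    with H_eq show ?thesis by (simp add: add.commute mult.commute)
  qed
qed

lemma rotation_exists:
  fixes c d :: complex
  assumes "norm c = norm d"
  obtains u where "norm u = 1" "u * c = d"
proof (cases "c = 0")
  case True
  with assms show ?thesis by (intro that[of 1]) auto
next
  case False
  with assms show ?thesis by (intro that[of "d / c"]) (auto simp: norm_divide)
qed

definition symm_pseudo_sphere :: "real \<Rightarrow> (complex \<times> complex) set" where
  "symm_pseudo_sphere r = {(z1 + z2, z1 * z2) | z1 z2.
     z1 \<in> unit_disc \<and> z2 \<in> unit_disc \<and> pseudo_hyperbolic_dist z1 z2 = r}"

lemma symm_pseudo_sphere_subset_symm_bidisc: "symm_pseudo_sphere r \<subseteq> symm_bidisc"
  unfolding symm_pseudo_sphere_def symm_bidisc_def by blast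

lemma orbit_zero_pair_eq_symm_pseudo_sphere:
  assumes c: "c \<in> unit_disc"
  shows "{H \<phi> (c, 0) | \<phi>. \<phi> \<in> AutD} = symm_pseudo_sphere (norm c)"
proof (rule equalityI)
  have zero: "0 \<in> unit_disc" by (simp add: unit_disc_def)
  have H_eq: "H \<phi> (c, 0) = (\<phi> 0 + \<phi> c, \<phi> 0 * \<phi> c)" for \<phi>
    using H_sum_prod[OF zero c, of \<phi>] by simp
  show "{H \<phi> (c, 0) | \<phi>. \<phi> \<in> AutD} \<subseteq> symm_pseudo_sphere (norm c)"
  proof
    fix x assume "x \<in> {H \<phi> (c, 0) | \<phi>. \<phi> \<in> AutD}"
    then obtain \<phi> where \<phi>: "\<phi> \<in> AutD" and x: "x = H \<phi> (c, 0)" by blast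
    have "pseudo_hyperbolic_dist (\<phi> 0) (\<phi> c) = norm c"
      using pseudo_hyperbolic_dist_AutD_invariant[OF \<phi> zero c]
      by (simp add: pseudo_hyperbolic_dist_def Moebius_function_simple)
    then show "x \<in> symm_pseudo_sphere (norm c)"
      using AutD_mem_unit_disc[OF \<phi>] zero c unfolding x H_eq symm_pseudo_sphere_def by blast
  qed
  show "symm_pseudo_sphere (norm c) \<subseteq> {H \<phi> (c, 0) | \<phi>. \<phi> \<in> AutD}"
  proof
    fix x assume "x \<in> symm_pseudo_sphere (norm c)"
    then obtain z1 z2 where z1: "norm z1 < 1" and z2: "norm z2 < 1"
        and dist: "norm c = norm (moebius z1 z2)" and x: "x = (z1 + z2, z1 * z2)"
      by (auto simp: symm_pseudo_sphere_def pseudo_hyperbolic_dist_def unit_disc_def)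
    obtain u where u: "norm u = 1" "u * c = moebius z1 z2"
      using rotation_exists[OF dist] by blast
    define \<phi> where "\<phi> = moebius (-z1) \<circ> (\<lambda>z. u * z)"
    have "\<phi> \<in> AutD"
      unfolding \<phi>_def using z1 u(1) by (intro AutD_comp moebius_in_AutD rotation_in_AutD) auto
    moreover have "H \<phi> (c, 0) = x"
      using moebius_inverse(2)[OF z1 z2] u(2)
      by (simp add: H_eq x \<phi>_def Moebius_function_of_zero)
    ultimately show "x \<in> {H \<phi> (c, 0) | \<phi>. \<phi> \<in> AutD}" by blast
  qed
qed

lemma symm_pseudo_sphere_eq_image:
  assumes "r < 1"
  shows "symm_pseudo_sphere r =
    (\<lambda>(w, v). (w + moebius (-w) v, w * moebius (-w) v)) ` (ball 0 1 \<times> sphere 0 r)"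
proof
  show "symm_pseudo_sphere r \<subseteq> (\<lambda>(w, v). (w + moebius (-w) v, w * moebius (-w) v)) ` (ball 0 1 \<times> sphere 0 r)"
  proof
    fix x assume "x \<in> symm_pseudo_sphere r"
    then obtain z1 z2 where z1: "norm z1 < 1" and z2: "norm z2 < 1"
        and dist: "norm (moebius z1 z2) = r" and x: "x = (z1 + z2, z1 * z2)"
      by (auto simp: symm_pseudo_sphere_def pseudo_hyperbolic_dist_def unit_disc_def)
    have "(z1, moebius z1 z2) \<in> ball 0 1 \<times> sphere 0 r"
      using z1 dist by simp
    moreover have "x = (\<lambda>(w, v). (w + moebius (-w) v, w * moebius (-w) v)) (z1, moebius z1 z2)"
      using moebius_inverse(2)[OF z1 z2] x by simp
    ultimately show "x \<in> (\<lambda>(w, v). (w + moebius (-w) v, w * moebius (-w) v)) ` (ball 0 1 \<times> sphere 0 r)"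
      by (rule rev_image_eqI)
  qed
  show "(\<lambda>(w, v). (w + moebius (-w) v, w * moebius (-w) v)) ` (ball 0 1 \<times> sphere 0 r) \<subseteq> symm_pseudo_sphere r"
  proof clarify
    fix w v :: complex assume w: "w \<in> ball 0 1" and v: "v \<in> sphere 0 r"
    have w1: "norm (-w) < 1" and v1: "norm v < 1" using w v assms by auto
    have "moebius (-w) v \<in> unit_disc"
      using Moebius_function_norm_lt_1[OF w1 v1] by (simp add: unit_disc_def)
    moreover have "pseudo_hyperbolic_dist w (moebius (-w) v) = r"
      using moebius_inverse(1)[of w v] w v1 v by (simp add: pseudo_hyperbolic_dist_def)
    ultimately show "(w + moebius (-w) v, w * moebius (-w) v) \<in> symm_pseudo_sphere r"
      using w unfolding symm_pseudo_sphere_def unit_disc_def by blast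
  qed
qed

lemma path_connected_symm_pseudo_sphere:
  assumes "r < 1"
  shows "path_connected (symm_pseudo_sphere r)"
proof -
  have "1 - cnj (- fst x) * snd x \<noteq> 0" if "x \<in> ball 0 1 \<times> sphere 0 r" for x :: "complex \<times> complex"
    using that assms by (intro moebius_denominator_nonzero) auto
  then have cont: "continuous_on (ball 0 1 \<times> sphere 0 r)
      (\<lambda>(w, v). (w + moebius (-w) v, w * moebius (-w) v))"
    unfolding case_prod_unfold Moebius_function_simple by (intro continuous_intros) auto
  have "path_connected (ball (0::complex) 1)"
    by (rule convex_imp_path_connected[OF convex_ball])
  moreover have "path_connected (sphere (0::complex) r)"
    by (rule path_connected_sphere) simp
  ultimately have "path_connected (ball (0::complex) 1 \<times> sphere (0::complex) r)"
    by (rule path_connected_Times)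
  with cont show ?thesis
    unfolding symm_pseudo_sphere_eq_image[OF assms] by (rule path_connected_continuous_image)
qed

lemma norm_one_minus_cnj_mult_squared:
  fixes z w :: complex
  shows "norm (1 - cnj z * w)^2 = 1 - (norm (z + w)^2 - norm (z - w)^2) / 2 + norm (z * w)^2"
  unfolding cmod_power2 by (simp add: power2_eq_square algebra_simps)

(* Both |z - w|^2 and |1 - cnj z w|^2 are expressed through z + w and z w. *)
lemma pseudo_hyperbolic_dist_eq_iff:
  assumes "norm z < 1" "norm w < 1" "0 \<le> r"
  shows "pseudo_hyperbolic_dist z w = r \<longleftrightarrow>
    norm ((z + w)^2 - 4 * (z * w)) =
      r^2 * (1 - (norm (z + w)^2 - norm ((z + w)^2 - 4 * (z * w))) / 2 + norm (z * w)^2)"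
proof -
  define d where "d = norm (1 - cnj z * w)"
  have "d > 0" using moebius_denominator_nonzero[OF assms(1,2)] by (simp add: d_def)
  have discr: "(z + w)^2 - 4 * (z * w) = (z - w)^2"
    by (simp add: power2_eq_square algebra_simps)
  have "pseudo_hyperbolic_dist z w = r \<longleftrightarrow> norm (z - w) = r * d"
    using \<open>d > 0\<close> by (auto simp: pseudo_hyperbolic_dist_def Moebius_function_simple norm_divide
        d_def field_simps norm_minus_commute)
  also have "\<dots> \<longleftrightarrow> norm (z - w)^2 = (r * d)^2"
    using \<open>d > 0\<close> assms(3) by (simp add: power2_eq_iff_nonneg)
  also have "\<dots> \<longleftrightarrow> norm ((z + w)^2 - 4 * (z * w)) =
      r^2 * (1 - (norm (z + w)^2 - norm ((z + w)^2 - 4 * (z * w))) / 2 + norm (z * w)^2)"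
    unfolding discr norm_power d_def power_mult_distrib norm_one_minus_cnj_mult_squared ..
  finally show ?thesis .
qed

lemma closedin_symm_pseudo_sphere:
  assumes "0 \<le> r"
  shows "closedin (top_of_set symm_bidisc) (symm_pseudo_sphere r)"
proof -
  define E where "E = {x :: complex \<times> complex. norm (fst x ^ 2 - 4 * snd x) =
      r^2 * (1 - (norm (fst x)^2 - norm (fst x ^ 2 - 4 * snd x)) / 2 + norm (snd x)^2)}"
  have "symm_pseudo_sphere r = symm_bidisc \<inter> E"
  proof (intro set_eqI iffI)
    fix x assume "x \<in> symm_pseudo_sphere r"
    then obtain z1 z2 where "norm z1 < 1" "norm z2 < 1" "pseudo_hyperbolic_dist z1 z2 = r"
        and x: "x = (z1 + z2, z1 * z2)"
      by (auto simp: symm_pseudo_sphere_def unit_disc_def)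
    with pseudo_hyperbolic_dist_eq_iff[OF _ _ assms] show "x \<in> symm_bidisc \<inter> E"
      by (auto simp: symm_bidisc_def unit_disc_def E_def)
  next
    fix x assume "x \<in> symm_bidisc \<inter> E"
    then obtain z1 z2 where "norm z1 < 1" "norm z2 < 1" "(z1 + z2, z1 * z2) \<in> E"
        and x: "x = (z1 + z2, z1 * z2)"
      by (auto simp: symm_bidisc_def unit_disc_def)
    with pseudo_hyperbolic_dist_eq_iff[OF _ _ assms] show "x \<in> symm_pseudo_sphere r"
      by (auto simp: symm_pseudo_sphere_def unit_disc_def E_def)
  qed
  moreover have "closed E"
    unfolding E_def by (intro closed_Collect_eq continuous_intros) auto
  ultimately show ?thesis
    by (metis closedin_closed_Int inf_commute)
qed

theorem lemma2p2:
  fixes a :: real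
  assumes "0 \<le> a" and "a < 1"
  shows "{H \<phi> (complex_of_real a, 0) | \<phi>. \<phi> \<in> AutD} \<subseteq> symm_bidisc
    \<and> closedin (top_of_set symm_bidisc) {H \<phi> (complex_of_real a, 0) | \<phi>. \<phi> \<in> AutD}
    \<and> path_connected {H \<phi> (complex_of_real a, 0) | \<phi>. \<phi> \<in> AutD}"
proof -
  have "complex_of_real a \<in> unit_disc"
    using assms by (simp add: unit_disc_def)
  then have orbit: "{H \<phi> (complex_of_real a, 0) | \<phi>. \<phi> \<in> AutD} = symm_pseudo_sphere a"
    using orbit_zero_pair_eq_symm_pseudo_sphere assms(1) by fastforce
  show ?thesis
    unfolding orbit
    using symm_pseudo_sphere_subset_symm_bidisc closedin_symm_pseudo_sphere[OF assms(1)]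
      path_connected_symm_pseudo_sphere[OF assms(2)]
    by blast
qed

end
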